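(* Let $N\ge 2$ be an integer and let $\Delta_N=\{p=(p_1,\dots,p_N)\in[0,1]^N:\ \sum_{i=1}^N p_i=1\}$ be the set of discrete probability distributions on $N$ points. For $p\in\Delta_N$ define the normalized Shannon entropy $$H(p)=\frac{1}{\log N}\Big(-\sum_{i=1}^N p_i\log p_i\Big)\quad(\text{with }0\log 0=0),$$ the disequilibrium $$D_{SQ}(p)=\sum_{i=1}^N\Big(p_i-\frac1N\Big)^2,$$ and the statistical complexity $C_{SQ}(p)=H(p)\,D_{SQ}(p)$. Then the maximum of $C_{SQ}$ over $\Delta_N$ is achieved on a distribution of the form $$p_k=p_{\max},\qquad p_i=\frac{1-p_{\max}}{N-1}\ \text{ for all } i\in\{1,\dots,N\}\setminus\{k\},$$ for some index $k\in\{1,\dots,N\}$ and some constant $p_{\max}\in[0,1]$; that is, at the appearance of a single component of arbitrary index $k$ over a uniform distribution of the remaining components.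
   Context: Logarithms are taken in a fixed base; the base cancels in the normalization of $H$. *)

theory Defs
  imports Complex_Main
begin

text \<open>Probability simplex on the index set {1..N}; values outside {1..N} are irrelevant.\<close>
definition prob_simplex :: "nat \<Rightarrow> (nat \<Rightarrow> real) set" where
  "prob_simplex N = {p. (\<forall>i\<in>{1..N}. 0 \<le> p i \<and> p i \<le> 1) \<and> (\<Sum>i=1..N. p i) = 1}"

text \<open>x log x with the convention 0 log 0 = 0 (natural log; the base cancels in H).\<close>
definition xlogx :: "real \<Rightarrow> real" where
  "xlogx x = (if x = 0 then 0 else x * ln x)"

definition norm_entropy :: "nat \<Rightarrow> (nat \<Rightarrow> real) \<Rightarrow> real" where
  "norm_entropy N p = (- (\<Sum>i=1..N. xlogx (p i))) / ln (real N)"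

definition diseq_SQ :: "nat \<Rightarrow> (nat \<Rightarrow> real) \<Rightarrow> real" where
  "diseq_SQ N p = (\<Sum>i=1..N. (p i - 1 / real N)^2)"

definition complexity_SQ :: "nat \<Rightarrow> (nat \<Rightarrow> real) \<Rightarrow> real" where
  "complexity_SQ N p = norm_entropy N p * diseq_SQ N p"

end

theory Submission
  imports Defs "HOL-Analysis.Analysis"
begin

(* A maximiser p exists by compactness; write H and D for its unnormalised entropy and its
   disequilibrium, both positive. No transfer of mass between two coordinates may increase H * D.
   Since x ln x has infinite slope at 0, every coordinate of p is positive. Spreading two equal
   largest coordinates apart loses entropy only to second order but gains disequilibrium, so the
   largest coordinate is attained once. Finally, stationarity under transfers says that
   D ln p_i - 2 H p_i does not depend on i; this function of p_i is strictly concave, so it takes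
   each value at most twice, hence all coordinates other than the largest one are equal. *)

section \<open>Elementary inequalities for the logarithm\<close>

lemma ln_add_one_le_cubic:
  fixes t :: real
  assumes "-1 < t"
  shows "ln (1 + t) \<le> t - t^2/2 + t^3/3"
proof -
  define f where "f t = t - t^2/2 + t^3/3 - ln (1 + t)" for t :: real
  have f': "DERIV f x :> x^3 / (1 + x)" if "-1 < x" for x
  proof -
    have "DERIV f x :> 1 - x + x^2 - 1 / (1 + x)"
      unfolding f_def using that by (auto intro!: derivative_eq_intros simp: power2_eq_square field_simps)
    also have "1 - x + x^2 - 1 / (1 + x) = x^3 / (1 + x)"
      using that by (simp add: field_simps power2_eq_square power3_eq_cube)
    finally show ?thesis .
  qed
  have "f 0 \<le> f t"
  proof (cases "0 \<le> t")
    case True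
    have "\<exists>y. DERIV f x :> y \<and> 0 \<le> y" if "0 \<le> x" for x
      using f'[of x] that by (intro exI[of _ "x^3 / (1 + x)"]) simp
    then show ?thesis by (rule DERIV_nonneg_imp_nondecreasing[OF True])
  next
    case False
    have "\<exists>y. DERIV f x :> y \<and> y \<le> 0" if "t \<le> x" "x \<le> 0" for x
    proof -
      have "x^3 \<le> 0"
        using that mult_nonpos_nonneg[of x "x^2"] by (simp add: power3_eq_cube power2_eq_square)
      then have "x^3 / (1 + x) \<le> 0"
        using that assms by (intro divide_nonpos_pos) auto
      with f'[of x] that assms show ?thesis by auto
    qed
    then show ?thesis using False by (intro DERIV_nonpos_imp_nonincreasing[of t 0]) auto
  qed
  then show ?thesis by (simp add: f_def)
qed

lemma ln_2_ge_two_thirds: "2/3 \<le> ln (2::real)"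
proof -
  have "ln (1 + (-1/2::real)) \<le> -2/3"
    using ln_add_one_le_cubic[of "-1/2"] by (simp add: power2_eq_square power3_eq_cube)
  then show ?thesis by (simp add: ln_div)
qed

lemma xlnx_tangent_le:
  fixes x y :: real
  assumes "0 < x" "0 \<le> y"
  shows "x * ln x + (y - x) * (ln x + 1) \<le> y * ln y"
proof (cases "y = 0")
  case False
  then have "y * (ln x - ln y) \<le> y * ((x - y) / y)"
    using assms by (intro mult_left_mono ln_diff_le) auto
  also have "\<dots> = x - y" using False by simp
  finally show ?thesis by (simp add: algebra_simps)
qed (use assms in simp)

lemma xlnx_symmetric_spread_le:
  fixes M s :: real
  assumes "0 < M" "\<bar>s\<bar> < 1"
  shows "(M + M * s) * ln (M + M * s) + (M - M * s) * ln (M - M * s)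
           \<le> 2 * M * ln M + M * (s^2 + 2 * s^4/3)"
proof -
  have split: "(M + M * u) * ln (M + M * u) = (M + M * u) * ln M + M * ((1 + u) * ln (1 + u))"
    if "\<bar>u\<bar> < 1" for u
  proof -
    have "ln (M + M * u) = ln M + ln (1 + u)"
      using ln_mult_pos[of M "1 + u"] that assms by (simp add: distrib_left)
    then show ?thesis by (simp add: algebra_simps)
  qed
  have cubic: "(1 + u) * ln (1 + u) \<le> (1 + u) * (u - u^2/2 + u^3/3)" if "\<bar>u\<bar> < 1" for u :: real
    using that by (intro mult_left_mono ln_add_one_le_cubic) auto
  have "(M + M * s) * ln (M + M * s) + (M - M * s) * ln (M - M * s)
      = 2 * M * ln M + M * ((1 + s) * ln (1 + s) + (1 + (-s)) * ln (1 + (-s)))"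
    using split[of s] split[of "-s"] assms by (simp add: algebra_simps)
  also have "\<dots> \<le> 2 * M * ln M
      + M * ((1 + s) * (s - s^2/2 + s^3/3) + (1 + (-s)) * (-s - (-s)^2/2 + (-s)^3/3))"
    using add_mono[OF cubic[of s] cubic[of "-s"]] assms by (intro add_left_mono mult_left_mono) auto
  also have "\<dots> = 2 * M * ln M + M * (s^2 + 2 * s^4/3)"
    by (simp add: field_simps power2_eq_square power3_eq_cube power4_eq_xxxx)
  finally show ?thesis .
qed

lemma continuous_on_xlnx: "continuous_on {0..} (\<lambda>x::real. x * ln x)"
  unfolding continuous_on_def
proof
  fix x :: real assume "x \<in> {0..}"
  show "((\<lambda>x. x * ln x) \<longlongrightarrow> x * ln x) (at x within {0..})"
  proof (cases "x = 0")
    case True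
    have "((\<lambda>y::real. - (ln y / y)) \<longlongrightarrow> 0) at_top"
      using tendsto_minus[OF ln_x_over_x_tendsto_0] by simp
    then have "((\<lambda>y::real. inverse y * ln (inverse y)) \<longlongrightarrow> 0) at_top"
      by (rule Lim_transform_eventually)
        (use eventually_gt_at_top[of "0::real"] in \<open>eventually_elim, simp add: ln_inverse divide_inverse\<close>)
    then have "((\<lambda>x::real. x * ln x) \<longlongrightarrow> 0) (at_right 0)"
      by (simp add: filterlim_at_right_to_top)
    then show ?thesis using True by (simp add: at_within_Ici_at_right)
  next
    case False
    with \<open>x \<in> {0..}\<close> have "isCont (\<lambda>x. x * ln x) x" by (auto intro!: continuous_intros)
    then show ?thesis using continuous_at_imp_continuous_at_within continuous_within by blast
  qed
qed

lemma ln_minus_linear_three_points: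
  fixes x y z D c :: real
  assumes "0 < x" "x < y" "y < z" "0 < D"
  shows "\<not> (D * ln x - c * x = D * ln y - c * y \<and> D * ln y - c * y = D * ln z - c * z)"
proof
  assume eq: "D * ln x - c * x = D * ln y - c * y \<and> D * ln y - c * y = D * ln z - c * z"
  have "(y - x) / y < ln y - ln x"
    using ln_diff_less[of x y] assms by (simp add: diff_divide_distrib)
  then have "D * ((y - x) / y) < D * (ln y - ln x)"
    using assms by (intro mult_strict_left_mono)
  also have "\<dots> = c * (y - x)" using eq by (simp add: algebra_simps)
  finally have "D / y < c"
    using mult_less_cancel_right_pos[of "y - x" "D / y" c] assms by auto
  have "c * (z - y) = D * (ln z - ln y)" using eq by (simp add: algebra_simps)
  also have "\<dots> < D * ((z - y) / y)"
    using ln_diff_less[of z y] assms by (intro mult_strict_left_mono) auto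
  finally have "c < D / y"
    using mult_less_cancel_right_pos[of "z - y" c "D / y"] assms by auto
  with \<open>D / y < c\<close> show False by simp
qed

(* Moving mass e into an empty coordinate gains entropy of order e ln(1/e), which beats the
   loss of order e in the disequilibrium. *)
lemma transfer_to_zero_increases_product:
  fixes E D M :: real
  assumes "0 < E" "0 < D" "0 < M"
  obtains e where "0 < e" "e \<le> M"
    "E * D < (E + (M * ln M - e * ln e - (M - e) * ln (M - e))) * (D - 2 * e * M + 2 * e^2)"
proof -
  define a where "a = 4 * M * E / D"
  define e where "e = min (M / 2) (min (D / (4 * M)) (M / 4 * exp (- a)))"
  have e: "0 < e" "e \<le> M / 2" "e \<le> D / (4 * M)" "e \<le> M / 4 * exp (- a)"
    using assms by (auto simp: e_def)
  define G where "G = M * ln M - e * ln e - (M - e) * ln (M - e)"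
  have tangent: "e * ln (M - e) + e \<le> M * ln M - (M - e) * ln (M - e)"
    using xlnx_tangent_le[of "M - e" M] e assms by (simp add: algebra_simps)
  have "e * ln (M / 2) \<le> e * ln (M - e)"
    using e assms by (intro mult_left_mono) auto
  with tangent e(1) have "e * (ln (M / 2) - ln e) \<le> G"
    unfolding G_def right_diff_distrib by linarith
  moreover have "a < ln (M / 2) - ln e"
  proof -
    have "2 * exp a \<le> M / (2 * e)"
      using e(1,4) by (simp add: field_simps exp_minus)
    then have "exp a < M / (2 * e)" using exp_gt_zero[of a] by linarith
    then have "ln (exp a) < ln (M / (2 * e))" using e(1) assms(3) by (subst ln_less_cancel_iff) auto
    then show ?thesis using e(1) assms by (simp add: ln_div ln_mult)
  qed
  ultimately have G: "e * a < G"
    using mult_strict_left_mono[of a "ln (M / 2) - ln e" e] e(1) by linarith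
  have D': "D / 2 \<le> D - 2 * e * M + 2 * e^2"
  proof -
    have "2 * e * M \<le> 2 * (D / (4 * M)) * M" using e(3) assms by (intro mult_right_mono) auto
    also have "\<dots> = D / 2" using assms by simp
    finally show ?thesis using zero_le_power2[of e] by linarith
  qed
  have "0 < a" using assms by (simp add: a_def)
  with G e(1) have "0 \<le> G" using mult_pos_pos[of e a] by linarith
  have "E * D = e * a * (D / 2) + E * (D - 2 * e * M)"
    using assms by (simp add: a_def field_simps)
  also have "\<dots> < G * (D - 2 * e * M + 2 * e^2) + E * (D - 2 * e * M + 2 * e^2)"
  proof (rule add_less_le_mono)
    have "e * a * (D / 2) < G * (D / 2)" using G assms by (intro mult_strict_right_mono) auto
    also have "\<dots> \<le> G * (D - 2 * e * M + 2 * e^2)"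
      using D' \<open>0 \<le> G\<close> by (intro mult_left_mono)
    finally show "e * a * (D / 2) < G * (D - 2 * e * M + 2 * e^2)" .
    show "E * (D - 2 * e * M) \<le> E * (D - 2 * e * M + 2 * e^2)"
      using assms by (simp add: mult_left_mono)
  qed
  also have "\<dots> = (E + G) * (D - 2 * e * M + 2 * e^2)" by (simp add: algebra_simps)
  finally show ?thesis using that e assms by (simp add: G_def)
qed

(* Splitting two coordinates equal to M into 6M/5 and 4M/5 costs at most 77M/1875 of entropy and
   gains 2M^2/25 of disequilibrium; the gain wins because M \<le> 1/2 and the entropy is at least
   ln 2 > 2/3. *)
lemma spreading_double_max_increases_product:
  fixes E D M :: real
  assumes "2/3 \<le> E" "0 \<le> D" "D < M" "M \<le> 1/2"
  shows "E * D < (E + (2 * M * ln M - (M + M/5) * ln (M + M/5) - (M - M/5) * ln (M - M/5)))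
                  * (D + 2 * (M/5)^2)"
proof -
  define G where "G = 2 * M * ln M - (M + M/5) * ln (M + M/5) - (M - M/5) * ln (M - M/5)"
  have M: "0 < M" using assms by simp
  have "(M + M/5) * ln (M + M/5) + (M - M/5) * ln (M - M/5) \<le> 2 * M * ln M + 77 * M / 1875"
    using xlnx_symmetric_spread_le[of M "1/5"] M by (simp add: power_divide)
  then have G: "- (77 * M / 1875) \<le> G" unfolding G_def by linarith
  have "M * (2 * M) \<le> M * 1" using M assms by (intro mult_left_mono) auto
  then have "2 * (M/5)^2 \<le> M / 25" unfolding power2_eq_square by linarith
  then have D': "0 \<le> D + 2 * (M/5)^2" "D + 2 * (M/5)^2 \<le> 26 * M / 25"
    using assms by auto
  have "- (77 * M / 1875) * (26 * M / 25) \<le> - (77 * M / 1875) * (D + 2 * (M/5)^2)"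
    using D' M by (intro mult_left_mono_neg) auto
  also have "\<dots> \<le> G * (D + 2 * (M/5)^2)"
    using G D' by (intro mult_right_mono) auto
  finally have "- (77 * M / 1875) * (26 * M / 25) \<le> G * (D + 2 * (M/5)^2)" .
  moreover have "E * (2 * (M/5)^2) \<ge> 2/3 * (2 * (M/5)^2)"
    using assms by (intro mult_right_mono) auto
  moreover have "- (77 * M / 1875) * (26 * M / 25) + 2/3 * (2 * (M/5)^2) > 0"
    using M by (simp add: power2_eq_square field_simps)
  ultimately have "E * D < E * D + G * (D + 2 * (M/5)^2) + E * (2 * (M/5)^2)" by linarith
  also have "\<dots> = (E + G) * (D + 2 * (M/5)^2)" by (simp add: algebra_simps)
  finally show ?thesis by (simp add: G_def)
qed

section \<open>Entropy and disequilibrium on the simplex\<close>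

definition entropy :: "nat \<Rightarrow> (nat \<Rightarrow> real) \<Rightarrow> real" where
  "entropy N p = - (\<Sum>i=1..N. p i * ln (p i))"

(* Since ln 0 = 0 in Isabelle, x * ln x already satisfies the convention 0 log 0 = 0. *)
lemma xlogx_eq: "xlogx x = x * ln x"
  by (simp add: xlogx_def)

lemma complexity_SQ_eq: "complexity_SQ N p = entropy N p * diseq_SQ N p / ln (real N)"
  by (simp add: complexity_SQ_def norm_entropy_def entropy_def xlogx_eq)

lemma complexity_SQ_cong:
  assumes "\<And>i. i \<in> {1..N} \<Longrightarrow> p i = q i"
  shows "complexity_SQ N p = complexity_SQ N q"
proof -
  have "(\<Sum>i=1..N. xlogx (p i)) = (\<Sum>i=1..N. xlogx (q i))"
    and "(\<Sum>i=1..N. (p i - 1 / real N)^2) = (\<Sum>i=1..N. (q i - 1 / real N)^2)"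
    using assms by (auto intro!: sum.cong)
  then show ?thesis by (simp add: complexity_SQ_def norm_entropy_def diseq_SQ_def)
qed

lemma prob_simplex_cong:
  assumes "\<And>i. i \<in> {1..N} \<Longrightarrow> p i = q i"
  shows "p \<in> prob_simplex N \<longleftrightarrow> q \<in> prob_simplex N"
proof -
  have "(\<Sum>i=1..N. p i) = (\<Sum>i=1..N. q i)" using assms by (auto intro!: sum.cong)
  with assms show ?thesis by (simp add: prob_simplex_def)
qed

lemma prob_simplex_nonneg: "p \<in> prob_simplex N \<Longrightarrow> i \<in> {1..N} \<Longrightarrow> 0 \<le> p i"
  by (simp add: prob_simplex_def)

lemma prob_simplex_le_1: "p \<in> prob_simplex N \<Longrightarrow> i \<in> {1..N} \<Longrightarrow> p i \<le> 1"
  by (simp add: prob_simplex_def)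

lemma prob_simplex_sum: "p \<in> prob_simplex N \<Longrightarrow> (\<Sum>i=1..N. p i) = 1"
  by (simp add: prob_simplex_def)

lemma prob_simplex_add_le_1:
  assumes "p \<in> prob_simplex N" "a \<in> {1..N}" "b \<in> {1..N}" "a \<noteq> b"
  shows "p a + p b \<le> 1"
proof -
  have "p a + p b = (\<Sum>i\<in>{a, b}. p i)" using assms(4) by simp
  also have "\<dots> \<le> (\<Sum>i=1..N. p i)"
    using assms by (intro sum_mono2) (auto simp: prob_simplex_def)
  finally show ?thesis using assms(1) by (simp add: prob_simplex_def)
qed

lemma entropy_nonneg:
  assumes "p \<in> prob_simplex N"
  shows "0 \<le> entropy N p"
proof -
  have "p i * ln (p i) \<le> 0" if "i \<in> {1..N}" for i
  proof (cases "p i = 0")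
    case False
    with prob_simplex_nonneg[OF assms that] prob_simplex_le_1[OF assms that] show ?thesis
      by (intro mult_nonneg_nonpos) auto
  qed simp
  then have "(\<Sum>i=1..N. p i * ln (p i)) \<le> 0" by (intro sum_nonpos) blast
  then show ?thesis by (simp add: entropy_def)
qed

lemma entropy_ge_minus_ln:
  assumes "p \<in> prob_simplex N" "\<And>i. i \<in> {1..N} \<Longrightarrow> p i \<le> M"
  shows "- ln M \<le> entropy N p"
proof -
  have "p i * ln (p i) \<le> p i * ln M" if "i \<in> {1..N}" for i
  proof (cases "p i = 0")
    case False
    with prob_simplex_nonneg[OF assms(1) that] assms(2)[OF that] show ?thesis
      by (intro mult_left_mono ln_mono) auto
  qed simp
  then have "(\<Sum>i=1..N. p i * ln (p i)) \<le> (\<Sum>i=1..N. p i * ln M)" by (intro sum_mono) blast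
  also have "\<dots> = ln M" using prob_simplex_sum[OF assms(1)] by (simp flip: sum_distrib_right)
  finally show ?thesis by (simp add: entropy_def)
qed

lemma diseq_SQ_nonneg: "0 \<le> diseq_SQ N p"
  by (simp add: diseq_SQ_def sum_nonneg)

lemma diseq_SQ_eq_sum_squares:
  assumes "p \<in> prob_simplex N"
  shows "diseq_SQ N p = (\<Sum>i=1..N. (p i)^2) - 1 / real N"
proof -
  have sum1: "(\<Sum>i=1..N. p i) = 1" using prob_simplex_sum[OF assms] .
  then have "N \<noteq> 0" by (cases "N = 0") auto
  have "diseq_SQ N p = (\<Sum>i=1..N. (p i)^2 - 2 / real N * p i + 1 / (real N)^2)"
    unfolding diseq_SQ_def by (rule sum.cong) (auto simp: power2_eq_square field_simps)
  also have "\<dots> = (\<Sum>i=1..N. (p i)^2) - 2 / real N * (\<Sum>i=1..N. p i) + real N / (real N)^2"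
    by (simp add: sum.distrib sum_subtractf sum_distrib_left)
  also have "\<dots> = (\<Sum>i=1..N. (p i)^2) - 1 / real N"
    using sum1 \<open>N \<noteq> 0\<close> by (simp add: power2_eq_square)
  finally show ?thesis .
qed

(* prob_simplex N leaves the coordinates outside {1..N} unconstrained; fixing them to 0 yields a
   compact set. *)
definition prob_simplex0 :: "nat \<Rightarrow> (nat \<Rightarrow> real) set" where
  "prob_simplex0 N = {p \<in> prob_simplex N. \<forall>i. i \<notin> {1..N} \<longrightarrow> p i = 0}"

lemma restrict_in_prob_simplex0:
  assumes "p \<in> prob_simplex N"
  shows "(\<lambda>i. if i \<in> {1..N} then p i else 0) \<in> prob_simplex0 N"
  using prob_simplex_cong[of N "\<lambda>i. if i \<in> {1..N} then p i else 0" p] assms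
  by (simp add: prob_simplex0_def)

lemma compact_prob_simplex0: "compact (prob_simplex0 N)"
proof -
  define S where "S i = (if i \<in> {1..N} then {0..1} else {0::real})" for i :: nat
  have "compactin (product_topology (\<lambda>_. euclideanreal) UNIV) (PiE UNIV S)"
    by (simp add: compactin_PiE S_def)
  then have compact: "compact (PiE UNIV S)"
    by (simp add: euclidean_product_topology)
  have "continuous_on UNIV (\<lambda>p::nat \<Rightarrow> real. \<Sum>i=1..N. p i)"
    by (intro continuous_intros) simp
  then have closed: "closed {p::nat \<Rightarrow> real. (\<Sum>i=1..N. p i) = 1}"
    using closed_Collect_eq[of "\<lambda>p. \<Sum>i=1..N. p i" "\<lambda>_. 1"] by simp
  have "prob_simplex0 N = PiE UNIV S \<inter> {p. (\<Sum>i=1..N. p i) = 1}"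
    unfolding prob_simplex0_def prob_simplex_def S_def
    by (auto simp: PiE_iff) (drule_tac x=i in spec, simp)+
  then show ?thesis using compact_Int_closed[OF compact closed] by simp
qed

lemma continuous_on_complexity_SQ: "continuous_on (prob_simplex0 N) (complexity_SQ N)"
proof -
  have coord: "continuous_on (prob_simplex0 N) (\<lambda>p. p i)" for i
    by (rule continuous_on_subset[OF continuous_on_product_coordinates]) simp
  have xlnx: "continuous_on (prob_simplex0 N) (\<lambda>p. p i * ln (p i))" if "i \<in> {1..N}" for i
    using that continuous_on_xlnx
    by (intro continuous_on_compose2[OF _ coord])
      (auto simp: prob_simplex0_def prob_simplex_def)
  have "continuous_on (prob_simplex0 N) (entropy N)"
    unfolding entropy_def[abs_def] using xlnx by (intro continuous_on_minus continuous_on_sum) auto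
  moreover have "continuous_on (prob_simplex0 N) (diseq_SQ N)"
    unfolding diseq_SQ_def[abs_def] by (intro continuous_on_sum continuous_intros coord)
  ultimately have "continuous_on (prob_simplex0 N) (\<lambda>p. entropy N p * diseq_SQ N p * inverse (ln (real N)))"
    by (intro continuous_on_mult_right continuous_on_mult)
  then show ?thesis by (simp add: complexity_SQ_eq[abs_def] divide_inverse)
qed

lemma complexity_SQ_attains_max:
  assumes "1 \<le> N"
  shows "\<exists>p\<in>prob_simplex0 N. \<forall>q\<in>prob_simplex N. complexity_SQ N q \<le> complexity_SQ N p"
proof -
  have "(\<lambda>i. if i = 1 then 1 else 0) \<in> prob_simplex0 N"
    using assms by (auto simp: prob_simplex0_def prob_simplex_def)
  then obtain p where p: "p \<in> prob_simplex0 N"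
    and max0: "\<forall>q\<in>prob_simplex0 N. complexity_SQ N q \<le> complexity_SQ N p"
    using continuous_attains_sup[OF compact_prob_simplex0 _ continuous_on_complexity_SQ] by blast
  have "complexity_SQ N q \<le> complexity_SQ N p" if "q \<in> prob_simplex N" for q
  proof -
    have "complexity_SQ N q = complexity_SQ N (\<lambda>i. if i \<in> {1..N} then q i else 0)"
      by (rule complexity_SQ_cong) simp
    also have "\<dots> \<le> complexity_SQ N p"
      using max0 restrict_in_prob_simplex0[OF that] by blast
    finally show ?thesis .
  qed
  with p show ?thesis by blast
qed

section \<open>Transfers of mass between two coordinates\<close>

definition transfer :: "real \<Rightarrow> nat \<Rightarrow> nat \<Rightarrow> (nat \<Rightarrow> real) \<Rightarrow> nat \<Rightarrow> real" where
  "transfer t b a p = p(a := p a + t, b := p b - t)"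

lemma sum_fun_upd2:
  fixes f :: "'a \<Rightarrow> 'b::ab_group_add"
  assumes "finite A" "a \<in> A" "b \<in> A" "a \<noteq> b"
  shows "(\<Sum>i\<in>A. f ((g(a := x, b := y)) i)) = (\<Sum>i\<in>A. f (g i)) - f (g a) - f (g b) + f x + f y"
proof -
  have split: "sum h A = h a + h b + sum h (A - {a, b})" for h :: "'c \<Rightarrow> 'b"
    using assms sum.subset_diff[of "{a, b}" A h] by (simp add: add.commute)
  have "sum (\<lambda>i. f ((g(a := x, b := y)) i)) (A - {a, b}) = sum (\<lambda>i. f (g i)) (A - {a, b})"
    by (intro sum.cong) auto
  with split[of "\<lambda>i. f ((g(a := x, b := y)) i)"] split[of "\<lambda>i. f (g i)"] assms(4)
  show ?thesis by (simp add: algebra_simps)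
qed

context
  fixes N :: nat and a b :: nat
  assumes a: "a \<in> {1..N}" and b: "b \<in> {1..N}" and ab: "a \<noteq> b"
begin

lemma sum_transfer: "(\<Sum>i=1..N. transfer t b a p i) = (\<Sum>i=1..N. p i)"
  using sum_fun_upd2[of "{1..N}" a b "\<lambda>z. z" p] a b ab by (simp add: transfer_def)

lemma entropy_transfer:
  "entropy N (transfer t b a p) = entropy N p
     + (p a * ln (p a) + p b * ln (p b) - (p a + t) * ln (p a + t) - (p b - t) * ln (p b - t))"
  using sum_fun_upd2[of "{1..N}" a b "\<lambda>z. z * ln z" p] a b ab
  by (simp add: entropy_def transfer_def)

lemma diseq_SQ_transfer:
  "diseq_SQ N (transfer t b a p) = diseq_SQ N p + (2 * t * (p a - p b) + 2 * t^2)"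
proof -
  let ?c = "1 / real N"
  have "diseq_SQ N (transfer t b a p)
      = diseq_SQ N p - (p a - ?c)^2 - (p b - ?c)^2 + (p a + t - ?c)^2 + (p b - t - ?c)^2"
    using sum_fun_upd2[of "{1..N}" a b "\<lambda>z. (z - ?c)^2" p] a b ab
    by (simp add: diseq_SQ_def transfer_def)
  also have "\<dots> = diseq_SQ N p + (2 * t * (p a - p b) + 2 * t^2)"
    by (simp add: power2_eq_square algebra_simps add_divide_distrib)
  finally show ?thesis .
qed

lemma transfer_in_prob_simplex0:
  assumes "p \<in> prob_simplex0 N" "- p a \<le> t" "t \<le> p b"
  shows "transfer t b a p \<in> prob_simplex0 N"
proof -
  have p: "p \<in> prob_simplex N" "\<forall>i. i \<notin> {1..N} \<longrightarrow> p i = 0"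
    using assms(1) by (auto simp: prob_simplex0_def)
  then have "p a + p b \<le> 1" using prob_simplex_add_le_1 a b ab by blast
  then have "\<forall>i\<in>{1..N}. 0 \<le> transfer t b a p i \<and> transfer t b a p i \<le> 1"
    using p assms(2,3) by (auto simp: prob_simplex_def transfer_def)
  moreover have "\<forall>i. i \<notin> {1..N} \<longrightarrow> transfer t b a p i = 0"
    using p a b by (simp add: transfer_def)
  moreover have "(\<Sum>i=1..N. transfer t b a p i) = 1"
    using sum_transfer prob_simplex_sum[OF p(1)] by simp
  ultimately show ?thesis by (simp add: prob_simplex0_def prob_simplex_def)
qed

end

section \<open>Maximisers of the statistical complexity\<close>

locale complexity_maximizer =
  fixes N :: nat and p :: "nat \<Rightarrow> real"
  assumes two_le_N: "2 \<le> N"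
    and maximizer_in: "p \<in> prob_simplex0 N"
    and maximal: "\<And>q. q \<in> prob_simplex0 N \<Longrightarrow> complexity_SQ N q \<le> complexity_SQ N p"
begin

lemma maximizer_in_prob_simplex: "p \<in> prob_simplex N"
  using maximizer_in by (simp add: prob_simplex0_def)

lemma entropy_diseq_le:
  assumes "q \<in> prob_simplex0 N"
  shows "entropy N q * diseq_SQ N q \<le> entropy N p * diseq_SQ N p"
proof -
  have "0 < ln (real N)" using two_le_N by simp
  with maximal[OF assms] show ?thesis by (simp add: complexity_SQ_eq divide_le_cancel)
qed

lemma transfer_not_better:
  assumes "a \<in> {1..N}" "b \<in> {1..N}" "a \<noteq> b" "- p a \<le> t" "t \<le> p b"
  shows "(entropy N p + (p a * ln (p a) + p b * ln (p b) - (p a + t) * ln (p a + t)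
             - (p b - t) * ln (p b - t)))
           * (diseq_SQ N p + (2 * t * (p a - p b) + 2 * t^2))
         \<le> entropy N p * diseq_SQ N p"
  using entropy_diseq_le[OF transfer_in_prob_simplex0[OF assms(1-3) maximizer_in assms(4,5)]]
  by (simp add: entropy_transfer[OF assms(1-3)] diseq_SQ_transfer[OF assms(1-3)])

lemma entropy_diseq_pos: "0 < entropy N p * diseq_SQ N p"
proof -
  define \<delta> where "\<delta> i = (if i = 1 then 1 else 0 :: real)" for i :: nat
  \<comment> \<open>the witness \<open>q = (2/3, 1/3, 0, \<dots>, 0)\<close>\<close>
  define q where "q = transfer (1/3) 1 2 \<delta>"
  have idx: "2 \<in> {1..N}" "1 \<in> {1..N}" "(2::nat) \<noteq> 1" using two_le_N by auto
  have \<delta>: "\<delta> \<in> prob_simplex0 N"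
    using two_le_N by (auto simp: \<delta>_def prob_simplex0_def prob_simplex_def)
  have "q \<in> prob_simplex0 N"
    using transfer_in_prob_simplex0[OF idx \<delta>] by (simp add: q_def \<delta>_def)
  have "entropy N \<delta> = 0"
    by (auto simp: entropy_def \<delta>_def intro!: sum.neutral)
  then have "entropy N q = - (1/3 * ln (1/3) + 2/3 * ln (2/3))"
    using entropy_transfer[OF idx] by (simp add: q_def \<delta>_def)
  moreover have "ln (1/3::real) < 0" "ln (2/3::real) < 0" by simp_all
  ultimately have "0 < entropy N q" by linarith
  have "(\<Sum>i=1..N. (\<delta> i)^2) = (\<Sum>i=1..N. \<delta> i)"
    by (intro sum.cong) (auto simp: \<delta>_def)
  then have "diseq_SQ N \<delta> = 1 - 1 / real N"
    using \<delta> diseq_SQ_eq_sum_squares prob_simplex_sum by (simp add: prob_simplex0_def)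
  then have "diseq_SQ N q = 5/9 - 1 / real N"
    using diseq_SQ_transfer[OF idx] by (simp add: q_def \<delta>_def power2_eq_square)
  moreover have "1 / real N \<le> 1 / 2" using two_le_N by (simp add: field_simps)
  ultimately have "0 < diseq_SQ N q" by linarith
  with \<open>0 < entropy N q\<close> have "0 < entropy N q * diseq_SQ N q" by simp
  also have "\<dots> \<le> entropy N p * diseq_SQ N p"
    using entropy_diseq_le[OF \<open>q \<in> prob_simplex0 N\<close>] .
  finally show ?thesis .
qed

lemma entropy_pos: "0 < entropy N p" and diseq_SQ_pos: "0 < diseq_SQ N p"
  using entropy_diseq_pos entropy_nonneg[OF maximizer_in_prob_simplex] diseq_SQ_nonneg[of N p]
  by (auto simp: zero_less_mult_iff)

definition pmax :: real where
  "pmax = Max (p ` {1..N})"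

lemma le_pmax: "i \<in> {1..N} \<Longrightarrow> p i \<le> pmax"
  unfolding pmax_def by (intro Max_ge) auto

lemma pmax_attained: obtains k where "k \<in> {1..N}" "p k = pmax"
proof -
  have "pmax \<in> p ` {1..N}" unfolding pmax_def using two_le_N by (intro Max_in) auto
  with that show ?thesis by (metis imageE)
qed

lemma diseq_SQ_less_pmax: "diseq_SQ N p < pmax"
proof -
  have "(\<Sum>i=1..N. (p i)^2) \<le> (\<Sum>i=1..N. pmax * p i)"
    using le_pmax prob_simplex_nonneg[OF maximizer_in_prob_simplex]
    by (intro sum_mono) (simp add: power2_eq_square mult_right_mono)
  also have "\<dots> = pmax"
    using prob_simplex_sum[OF maximizer_in_prob_simplex] by (simp flip: sum_distrib_left)
  finally have "(\<Sum>i=1..N. (p i)^2) \<le> pmax" .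
  moreover have "0 < 1 / real N" using two_le_N by simp
  ultimately show ?thesis
    using diseq_SQ_eq_sum_squares[OF maximizer_in_prob_simplex] by linarith
qed

lemma pmax_pos: "0 < pmax"
  using diseq_SQ_pos diseq_SQ_less_pmax by simp

lemma maximizer_pos:
  assumes i: "i \<in> {1..N}"
  shows "0 < p i"
proof (rule ccontr)
  assume "\<not> 0 < p i"
  then have "p i = 0" using prob_simplex_nonneg[OF maximizer_in_prob_simplex i] by simp
  obtain k where k: "k \<in> {1..N}" "p k = pmax" using pmax_attained .
  with \<open>p i = 0\<close> pmax_pos have "i \<noteq> k" by auto
  obtain e where e: "0 < e" "e \<le> pmax"
    and gain: "entropy N p * diseq_SQ N p
      < (entropy N p + (pmax * ln pmax - e * ln e - (pmax - e) * ln (pmax - e)))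
        * (diseq_SQ N p - 2 * e * pmax + 2 * e^2)"
    using transfer_to_zero_increases_product[OF entropy_pos diseq_SQ_pos pmax_pos] .
  have "(entropy N p + (pmax * ln pmax - e * ln e - (pmax - e) * ln (pmax - e)))
        * (diseq_SQ N p - 2 * e * pmax + 2 * e^2) \<le> entropy N p * diseq_SQ N p"
    using transfer_not_better[OF i k(1) \<open>i \<noteq> k\<close>, of e] \<open>p i = 0\<close> k e
    by (simp add: algebra_simps)
  with gain show False by simp
qed

lemma pmax_unique:
  assumes k: "k \<in> {1..N}" "p k = pmax" and j: "j \<in> {1..N}" "j \<noteq> k"
  shows "p j < pmax"
proof (rule ccontr)
  assume "\<not> p j < pmax"
  then have "p j = pmax" using le_pmax[OF j(1)] by simp
  have "pmax \<le> 1/2"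
    using prob_simplex_add_le_1[OF maximizer_in_prob_simplex k(1) j(1)] j(2) k(2) \<open>p j = pmax\<close> by simp
  then have "ln pmax \<le> ln (1/2)" using pmax_pos by simp
  then have "ln 2 \<le> - ln pmax" by (simp add: ln_div)
  then have "2/3 \<le> entropy N p"
    using ln_2_ge_two_thirds entropy_ge_minus_ln[OF maximizer_in_prob_simplex le_pmax] by linarith
  have "- p k \<le> pmax/5" "pmax/5 \<le> p j"
    using pmax_pos k(2) \<open>p j = pmax\<close> by simp_all
  then have "(entropy N p + (2 * pmax * ln pmax - (pmax + pmax/5) * ln (pmax + pmax/5)
        - (pmax - pmax/5) * ln (pmax - pmax/5))) * (diseq_SQ N p + 2 * (pmax/5)^2)
      \<le> entropy N p * diseq_SQ N p"
    using transfer_not_better[OF k(1) j(1) j(2)[symmetric], of "pmax/5"] k(2) \<open>p j = pmax\<close>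
    by (simp add: mult.assoc)
  with spreading_double_max_increases_product[OF \<open>2/3 \<le> entropy N p\<close> diseq_SQ_nonneg
      diseq_SQ_less_pmax \<open>pmax \<le> 1/2\<close>]
  show False by simp
qed

lemma maximizer_stationary:
  assumes a: "a \<in> {1..N}" and b: "b \<in> {1..N}"
  shows "diseq_SQ N p * ln (p a) - 2 * entropy N p * p a
       = diseq_SQ N p * ln (p b) - 2 * entropy N p * p b"
proof (cases "a = b")
  case False
  define f where "f t = (entropy N p + (p a * ln (p a) + p b * ln (p b) - (p a + t) * ln (p a + t)
      - (p b - t) * ln (p b - t))) * (diseq_SQ N p + (2 * t * (p a - p b) + 2 * t^2))" for t
  have "DERIV f 0 :> (ln (p b) - ln (p a)) * diseq_SQ N p + 2 * (p a - p b) * entropy N p"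
    unfolding f_def using maximizer_pos[OF a] maximizer_pos[OF b]
    by (auto intro!: derivative_eq_intros simp: algebra_simps)
  moreover have "0 < min (p a) (p b)" using maximizer_pos[OF a] maximizer_pos[OF b] by simp
  moreover have "\<forall>t. \<bar>0 - t\<bar> < min (p a) (p b) \<longrightarrow> f t \<le> f 0"
    using transfer_not_better[OF a b False] by (auto simp: f_def)
  ultimately have "(ln (p b) - ln (p a)) * diseq_SQ N p + 2 * (p a - p b) * entropy N p = 0"
    by (rule DERIV_local_max)
  then show ?thesis by (simp add: algebra_simps)
qed simp

lemma non_max_coordinates_eq:
  assumes k: "k \<in> {1..N}" "p k = pmax"
    and i: "i \<in> {1..N}" "i \<noteq> k" and j: "j \<in> {1..N}" "j \<noteq> k"
  shows "p i = p j"
proof -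
  have False if x: "x \<in> {1..N}" and y: "y \<in> {1..N}" "y \<noteq> k" and "p x < p y" for x y
  proof -
    have "diseq_SQ N p * ln (p x) - 2 * entropy N p * p x
        = diseq_SQ N p * ln (p y) - 2 * entropy N p * p y"
      using maximizer_stationary[OF x y(1)] .
    moreover have "diseq_SQ N p * ln (p y) - 2 * entropy N p * p y
        = diseq_SQ N p * ln pmax - 2 * entropy N p * pmax"
      using maximizer_stationary[OF y(1) k(1)] k(2) by simp
    ultimately show False
      using ln_minus_linear_three_points[OF maximizer_pos[OF x] \<open>p x < p y\<close> pmax_unique[OF k y]
          diseq_SQ_pos, of "2 * entropy N p"]
      by blast
  qed
  with i j show ?thesis by (metis linorder_neqE_linordered_idom)
qed

lemma maximizer_shape: "\<exists>k\<in>{1..N}. \<forall>i\<in>{1..N}. i \<noteq> k \<longrightarrow> p i = (1 - p k) / (real N - 1)"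
proof -
  obtain k where k: "k \<in> {1..N}" "p k = pmax" using pmax_attained .
  define j where "j = (if k = 1 then 2 else 1::nat)"
  have j: "j \<in> {1..N}" "j \<noteq> k" using two_le_N k by (auto simp: j_def)
  have others: "p i = p j" if "i \<in> {1..N} - {k}" for i
    using non_max_coordinates_eq[OF k _ _ j] that by simp
  have "1 = p k + (\<Sum>i\<in>{1..N} - {k}. p i)"
    using prob_simplex_sum[OF maximizer_in_prob_simplex] k(1) by (simp add: sum.remove)
  also have "(\<Sum>i\<in>{1..N} - {k}. p i) = (real N - 1) * p j"
    using others k(1) two_le_N by simp
  finally have "p j = (1 - p k) / (real N - 1)"
    using two_le_N by (simp add: field_simps)
  with others k(1) show ?thesis by (intro bexI[of _ k]) auto
qed

end

theorem lemma3:
  fixes N :: nat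
  assumes "N \<ge> 2"
  shows "\<exists>k\<in>{1..N}. \<exists>pmax\<in>{0..1::real}.
           (\<lambda>i. if i = k then pmax else (1 - pmax) / (real N - 1)) \<in> prob_simplex N \<and>
           (\<forall>p\<in>prob_simplex N.
              complexity_SQ N p \<le> complexity_SQ N (\<lambda>i. if i = k then pmax else (1 - pmax) / (real N - 1)))"
proof -
  obtain p where p: "p \<in> prob_simplex0 N"
    and max: "\<forall>q\<in>prob_simplex N. complexity_SQ N q \<le> complexity_SQ N p"
    using complexity_SQ_attains_max[of N] assms by auto
  interpret complexity_maximizer N p
    using assms p max by unfold_locales (auto simp: prob_simplex0_def)
  obtain k where k: "k \<in> {1..N}"
    and shape: "\<forall>i\<in>{1..N}. i \<noteq> k \<longrightarrow> p i = (1 - p k) / (real N - 1)"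
    using maximizer_shape by blast
  define f where "f = (\<lambda>i. if i = k then p k else (1 - p k) / (real N - 1))"
  have agree: "\<And>i. i \<in> {1..N} \<Longrightarrow> f i = p i" using shape by (auto simp: f_def)
  have "f \<in> prob_simplex N"
    using prob_simplex_cong[OF agree] maximizer_in_prob_simplex by simp
  moreover have "\<forall>q\<in>prob_simplex N. complexity_SQ N q \<le> complexity_SQ N f"
    using max complexity_SQ_cong[OF agree] by simp
  moreover have "p k \<in> {0..1}"
    using prob_simplex_nonneg[OF maximizer_in_prob_simplex k]
      prob_simplex_le_1[OF maximizer_in_prob_simplex k] by simp
  ultimately show ?thesis using k unfolding f_def by blast
qed

end
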